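(* Let $i$ be an index with $0\leq i<k$. An element $\lambda_t$ with $t>s$ is an order-$i$ seed of $\tilde\Lambda$ if and only if one of the following pairwise excluding conditions holds: (1) $\lambda_t$ is an order-$i$ seed of $\Lambda$; (2) $i<k-1$, $\lambda_t=\lambda_s+\lambda_{i+1}-\lambda_i$ and $\lambda_s$ is an order-$(i+1)$ seed of $\Lambda$; (3) $i=k-1=s-2$ and $\lambda_t=\lambda_s+\lambda_k-\lambda_{k-1}$; (4) $i=k-1=s-1$ and either $\lambda_t=\lambda_s+\lambda_k-\lambda_{k-1}$ or $\lambda_t=\lambda_s+\lambda_k-\lambda_{k-1}+1$.
   Context: A numerical semigroup is a subset $\Lambda\subseteq\mathbb{N}_0$ containing $0$, closed under addition, with finite complement; its genus $g$ is the number of gaps (elements of $\mathbb{N}_0\setminus\Lambda$). Write $\Lambda=\{\lambda_i\}_{i\geq 0}$ with $0=\lambda_0<\lambda_1<\lambda_2<\cdots$; let $k$ be the smallest index with $\lambda_i=i+g$ for all $i\geq k$, and $c=\lambda_k=k+g$ the conductor. A generator of a numerical semigroup is a non-zero element that is not the sum of two non-zero elements of it. For $i\geq 0$ let $\Lambda_i=\Lambda\setminus\{\lambda_1,\dots,\lambda_i\}$. An element $\lambda_t$ with $t\geq k$ is an order-$i$ seed of $\Lambda$ (for $0\leq i<k$) if $\lambda_t+\lambda_i$ is a generator of $\Lambda_i$. Fix an order-zero seed $\lambda_s$ of $\Lambda$ (so $s\geq k$ and $\lambda_s$ is a generator of $\Lambda$), and let $\tilde\Lambda=\Lambda\setminus\{\lambda_s\}$,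 a numerical semigroup of genus $g+1$ with elements $\tilde\lambda_i=\lambda_i$ for $i<s$, $\tilde\lambda_i=\lambda_{i+1}$ for $i\geq s$, and conductor $\lambda_s+1$. Thus an order-$i$ seed of $\tilde\Lambda$, with $0\leq i<s$, is an element $\lambda_t$ with $t>s$ such that $\lambda_t+\lambda_i$ is a generator of $\tilde\Lambda_i=\Lambda\setminus\{\lambda_1,\dots,\lambda_i,\lambda_s\}$. *)

theory Defs
  imports Main "HOL-Library.Infinite_Set"
begin

definition numerical_semigroup :: "nat set \<Rightarrow> bool" where
  "numerical_semigroup L \<longleftrightarrow> 0 \<in> L \<and> (\<forall>x\<in>L. \<forall>y\<in>L. x + y \<in> L) \<and> finite (UNIV - L)"

definition lam :: "nat set \<Rightarrow> nat \<Rightarrow> nat" where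
  "lam L i = enumerate L i"

definition genus :: "nat set \<Rightarrow> nat" where
  "genus L = card (UNIV - L)"

definition kidx :: "nat set \<Rightarrow> nat" where
  "kidx L = (LEAST k. \<forall>i\<ge>k. lam L i = i + genus L)"

definition conductor :: "nat set \<Rightarrow> nat" where
  "conductor L = lam L (kidx L)"

definition is_generator :: "nat set \<Rightarrow> nat \<Rightarrow> bool" where
  "is_generator L x \<longleftrightarrow> x \<in> L \<and> x \<noteq> 0 \<and>
     \<not> (\<exists>a\<in>L. \<exists>b\<in>L. a \<noteq> 0 \<and> b \<noteq> 0 \<and> a + b = x)"

definition Lsub :: "nat set \<Rightarrow> nat \<Rightarrow> nat set" where
  "Lsub L i = L - {lam L j | j. 1 \<le> j \<and> j \<le> i}"

definition order_seed :: "nat set \<Rightarrow> nat \<Rightarrow> nat \<Rightarrow> bool" where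
  "order_seed L i x \<longleftrightarrow> i < kidx L \<and> (\<exists>t\<ge>kidx L. x = lam L t) \<and>
     is_generator (Lsub L i) (x + lam L i)"

end

theory Submission
  imports Defs
begin

(*
  Put y = \<lambda>\<^sub>t + \<lambda>\<^sub>i. Then \<lambda>\<^sub>t is an order-i seed of \<Lambda> iff y is not a sum of two
  elements of \<Lambda> larger than \<lambda>\<^sub>i. Removing the generator \<lambda>\<^sub>s leaves a numerical
  semigroup with k = s and the same \<lambda>\<^sub>i, so \<lambda>\<^sub>t is an order-i seed of it iff no such
  decomposition avoids \<lambda>\<^sub>s. The new seeds are therefore the \<lambda>\<^sub>t for which
  decompositions exist but all of them have the form y = \<lambda>\<^sub>s + b. Since every integer above the
  conductor c lies in \<Lambda> and the elements of \<Lambda> above \<lambda>\<^sub>i are at least \<lambda>\<^sub>i\<^sub>+\<^sub>1, any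
  larger b could be traded for a decomposition avoiding \<lambda>\<^sub>s. This forces b = \<lambda>\<^sub>i\<^sub>+\<^sub>1 when
  \<lambda>\<^sub>i\<^sub>+\<^sub>1 < c, and when \<lambda>\<^sub>i\<^sub>+\<^sub>1 = c it forces either b = c and s = k + 1, or
  b \<in> {c, c + 1} and s = k.
*)

lemma numerical_semigroup_infinite: "numerical_semigroup L \<Longrightarrow> infinite L"
  unfolding numerical_semigroup_def by (metis Diff_infinite_finite infinite_UNIV_nat)

lemma card_less_enumerate:
  fixes S :: "nat set"
  assumes "infinite S"
  shows "card (S \<inter> {..<enumerate S n}) = n"
proof -
  have "S \<inter> {..<enumerate S n} = enumerate S ` {..<n}"
  proof
    show "S \<inter> {..<enumerate S n} \<subseteq> enumerate S ` {..<n}"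
    proof
      fix y assume y: "y \<in> S \<inter> {..<enumerate S n}"
      then obtain m where m: "y = enumerate S m" using range_enumerate[OF assms] by blast
      then have "m < n" using y assms by auto
      then show "y \<in> enumerate S ` {..<n}" using m by auto
    qed
    show "enumerate S ` {..<n} \<subseteq> S \<inter> {..<enumerate S n}"
      using assms enumerate_in_set by auto
  qed
  moreover have "inj (enumerate S)" using inj_enumerate assms by blast
  ultimately show ?thesis by (simp add: card_image inj_on_subset)
qed

lemma enumerate_eqI:
  fixes S :: "nat set"
  assumes "infinite S" "x \<in> S" "card (S \<inter> {..<x}) = n"
  shows "enumerate S n = x"
proof -
  obtain m where m: "x = enumerate S m" using range_enumerate[OF assms(1)] assms(2) by blast
  then have "m = n" using card_less_enumerate[OF assms(1), of m] assms(3) by simp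
  then show ?thesis using m by simp
qed

context
  fixes L :: "nat set"
  assumes ns: "numerical_semigroup L"
begin

lemma lam_less_iff: "lam L m < lam L n \<longleftrightarrow> m < n"
  unfolding lam_def using numerical_semigroup_infinite[OF ns] by simp

lemma lam_le_iff: "lam L m \<le> lam L n \<longleftrightarrow> m \<le> n"
  unfolding lam_def using numerical_semigroup_infinite[OF ns] by simp

lemma lam_eq_iff: "lam L m = lam L n \<longleftrightarrow> m = n"
  by (metis lam_le_iff le_antisym order_refl)

lemma lam_in: "lam L m \<in> L"
  unfolding lam_def using numerical_semigroup_infinite[OF ns] enumerate_in_set by blast

lemma ex_lam_eq: "x \<in> L \<Longrightarrow> \<exists>m. x = lam L m"
  unfolding lam_def using numerical_semigroup_infinite[OF ns] range_enumerate by (metis rangeE)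

lemma lam_0: "lam L 0 = 0"
  using ns unfolding lam_def enumerate_0 numerical_semigroup_def by (auto intro: Least_equality)

lemma lam_Suc_le: "a \<in> L \<Longrightarrow> lam L i < a \<Longrightarrow> lam L (Suc i) \<le> a"
  by (metis Suc_leI lam_le_iff lam_less_iff ex_lam_eq)

lemma card_less_lam: "card (L \<inter> {..<lam L j}) = j"
  unfolding lam_def using card_less_enumerate numerical_semigroup_infinite[OF ns] .

lemma ex_lam_eq_add_genus: "\<exists>K. \<forall>j\<ge>K. lam L j = j + genus L"
proof -
  define G where "G = UNIV - L"
  have "finite G" using ns by (simp add: numerical_semigroup_def G_def)
  then obtain M where M: "G \<subseteq> {..<M}" using finite_nat_iff_bounded by blast
  have "lam L j = j + genus L" if "M \<le> j" for j
  proof -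
    define x where "x = j + genus L"
    have "x \<in> L" using M that G_def x_def by auto
    have "{..<x} = (L \<inter> {..<x}) \<union> G" using M that G_def x_def by auto
    then have "x = card ((L \<inter> {..<x}) \<union> G)" by (metis card_lessThan)
    also have "\<dots> = card (L \<inter> {..<x}) + card G"
      by (rule card_Un_disjoint) (use \<open>finite G\<close> G_def in auto)
    finally have "card (L \<inter> {..<x}) = j" by (simp add: x_def genus_def G_def)
    then show ?thesis
      using enumerate_eqI[OF numerical_semigroup_infinite[OF ns] \<open>x \<in> L\<close>] x_def lam_def by simp
  qed
  then show ?thesis by blast
qed

lemma lam_eq_add_genus: "kidx L \<le> j \<Longrightarrow> lam L j = j + genus L"
  unfolding kidx_def using LeastI_ex[OF ex_lam_eq_add_genus] by blast

lemma mem_if_lam_kidx_le: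
  assumes "lam L (kidx L) \<le> x"
  shows "x \<in> L"
proof -
  have "lam L (kidx L) = kidx L + genus L" by (simp add: lam_eq_add_genus)
  then have "lam L (x - genus L) = x" using lam_eq_add_genus[of "x - genus L"] assms by simp
  then show ?thesis using lam_in by metis
qed

lemma mem_Lsub_iff: "x \<in> Lsub L i \<longleftrightarrow> x \<in> L \<and> (x = 0 \<or> lam L i < x)"
proof -
  have "x \<in> Lsub L i \<longleftrightarrow> x \<in> L \<and> (\<forall>m. x = lam L m \<longrightarrow> m = 0 \<or> i < m)"
    unfolding Lsub_def by (auto simp: not_le)
  also have "\<dots> \<longleftrightarrow> x \<in> L \<and> (x = 0 \<or> lam L i < x)"
    using ex_lam_eq lam_less_iff lam_eq_iff lam_0 by metis
  finally show ?thesis .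
qed

end

definition splits_above :: "nat set \<Rightarrow> nat \<Rightarrow> nat \<Rightarrow> bool" where
  "splits_above A m y \<longleftrightarrow> (\<exists>a\<in>A. \<exists>b\<in>A. m < a \<and> m < b \<and> a + b = y)"

lemma splits_above_mono: "splits_above A m y \<Longrightarrow> A \<subseteq> B \<Longrightarrow> splits_above B m y"
  unfolding splits_above_def by blast

lemma is_generator_Lsub_iff:
  assumes ns: "numerical_semigroup L" and "y \<in> L" "lam L i < y"
  shows "is_generator (Lsub L i) y \<longleftrightarrow> \<not> splits_above L (lam L i) y"
proof -
  have "a \<in> Lsub L i \<and> a \<noteq> 0 \<longleftrightarrow> a \<in> L \<and> lam L i < a" for a
    using mem_Lsub_iff[OF ns] by auto
  moreover have "y \<in> Lsub L i" "y \<noteq> 0" using mem_Lsub_iff[OF ns] assms by auto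
  ultimately show ?thesis unfolding is_generator_def splits_above_def by blast
qed

lemma order_seed_iff_not_splits_above:
  assumes ns: "numerical_semigroup L" and "i < kidx L" "kidx L \<le> t"
  shows "order_seed L i (lam L t) \<longleftrightarrow> \<not> splits_above L (lam L i) (lam L t + lam L i)"
proof -
  have "lam L i < lam L (kidx L)" "lam L (kidx L) \<le> lam L t"
    using assms by (simp_all add: lam_less_iff lam_le_iff)
  then have "lam L t + lam L i \<in> L" "lam L i < lam L t + lam L i"
    using mem_if_lam_kidx_le[OF ns] by simp_all
  then show ?thesis
    unfolding order_seed_def using assms is_generator_Lsub_iff[OF ns] by auto
qed

lemma numerical_semigroup_Diff_generator:
  assumes ns: "numerical_semigroup L" and gen: "is_generator L x"
  shows "numerical_semigroup (L - {x})"
proof -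
  have "a + b \<noteq> x" if "a \<in> L - {x}" "b \<in> L - {x}" for a b
    using gen that unfolding is_generator_def by force
  moreover have "UNIV - (L - {x}) = insert x (UNIV - L)" by auto
  ultimately show ?thesis
    using assms unfolding numerical_semigroup_def is_generator_def by auto
qed

context
  fixes L :: "nat set" and s :: nat
  assumes ns: "numerical_semigroup L"
begin

lemma lam_Diff_less:
  assumes "j < s"
  shows "lam (L - {lam L s}) j = lam L j"
proof -
  have "(L - {lam L s}) \<inter> {..<lam L j} = L \<inter> {..<lam L j}"
    using lam_less_iff[OF ns, of j s] assms by auto
  moreover have "lam L j \<in> L - {lam L s}" using lam_in[OF ns] lam_eq_iff[OF ns] assms by auto
  ultimately show ?thesis
    unfolding lam_def[of "L - {lam L s}"] using card_less_lam[OF ns]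
    by (intro enumerate_eqI) (auto simp: numerical_semigroup_infinite[OF ns] lam_def)
qed

lemma lam_Diff_ge:
  assumes "s \<le> j"
  shows "lam (L - {lam L s}) j = lam L (Suc j)"
proof -
  have "(L - {lam L s}) \<inter> {..<lam L (Suc j)} = (L \<inter> {..<lam L (Suc j)}) - {lam L s}"
    by auto
  moreover have "lam L s \<in> L \<inter> {..<lam L (Suc j)}"
    using lam_less_iff[OF ns, of s "Suc j"] assms lam_in[OF ns] by auto
  moreover have "lam L (Suc j) \<in> L - {lam L s}" using lam_in[OF ns] lam_eq_iff[OF ns] assms by auto
  ultimately show ?thesis
    unfolding lam_def[of "L - {lam L s}"] using card_less_lam[OF ns]
    by (intro enumerate_eqI) (auto simp: numerical_semigroup_infinite[OF ns] lam_def)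
qed

lemma genus_Diff: "genus (L - {lam L s}) = Suc (genus L)"
proof -
  have "UNIV - (L - {lam L s}) = insert (lam L s) (UNIV - L)" using lam_in[OF ns] by auto
  moreover have "finite (UNIV - L)" "lam L s \<notin> UNIV - L"
    using ns lam_in[OF ns] by (auto simp: numerical_semigroup_def)
  ultimately show ?thesis unfolding genus_def by simp
qed

lemma kidx_Diff:
  assumes s: "kidx L \<le> s"
  shows "kidx (L - {lam L s}) = s"
  unfolding kidx_def
proof (rule Least_equality)
  show "\<forall>i\<ge>s. lam (L - {lam L s}) i = i + genus (L - {lam L s})"
    using lam_Diff_ge lam_eq_add_genus[OF ns] genus_Diff s by auto
next
  fix y assume y: "\<forall>i\<ge>y. lam (L - {lam L s}) i = i + genus (L - {lam L s})"
  show "s \<le> y"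
  proof (rule ccontr)
    assume "\<not> s \<le> y"
    then have "y \<le> s - 1" "s - 1 < s" by auto
    then have "lam L (s - 1) = s - 1 + Suc (genus L)"
      using y lam_Diff_less genus_Diff by metis
    moreover have "lam L (s - 1) < lam L s" using lam_less_iff[OF ns] \<open>s - 1 < s\<close> by simp
    ultimately show False using lam_eq_add_genus[OF ns s] by simp
  qed
qed

end

lemma is_generator_if_order_seed_0:
  assumes ns: "numerical_semigroup L" and "order_seed L 0 x"
  shows "is_generator L x"
proof -
  have "Lsub L 0 = L" by (simp add: Lsub_def)
  then show ?thesis using assms lam_0[OF ns] by (simp add: order_seed_def)
qed

lemma order_seed_Diff_iff:
  assumes ns: "numerical_semigroup L" and gen: "is_generator L (lam L s)"
    and "kidx L \<le> s" "i < kidx L" "s < t"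
  shows "order_seed (L - {lam L s}) i (lam L t) \<longleftrightarrow>
    \<not> splits_above (L - {lam L s}) (lam L i) (lam L t + lam L i)"
proof -
  have "lam (L - {lam L s}) (t - 1) = lam L t" "lam (L - {lam L s}) i = lam L i"
    using assms lam_Diff_ge[OF ns, of s "t - 1"] lam_Diff_less[OF ns, of i s] by simp_all
  then show ?thesis
    using order_seed_iff_not_splits_above[OF numerical_semigroup_Diff_generator[OF ns gen], of i "t - 1"]
      kidx_Diff[OF ns] assms by simp
qed

definition splits_only_through :: "nat set \<Rightarrow> nat \<Rightarrow> nat \<Rightarrow> nat \<Rightarrow> bool" where
  "splits_only_through A a m y \<longleftrightarrow> splits_above A m y \<and> \<not> splits_above (A - {a}) m y"

lemma splits_only_throughD:
  assumes "splits_only_through A a m y"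
  obtains b where "b \<in> A" "m < b" "a + b = y"
  using assms unfolding splits_only_through_def splits_above_def by (metis Diff_iff add.commute singletonD)

lemma splits_above_DiffI:
  "a' \<in> A \<Longrightarrow> b' \<in> A \<Longrightarrow> m < a' \<Longrightarrow> m < b' \<Longrightarrow> a' \<noteq> a \<Longrightarrow> b' \<noteq> a \<Longrightarrow> a' + b' = y
    \<Longrightarrow> splits_above (A - {a}) m y"
  unfolding splits_above_def by blast

context
  fixes L :: "nat set" and s i t :: nat
  assumes ns: "numerical_semigroup L" and s_ge: "kidx L \<le> s" and t_gt: "s < t"
begin

lemma splits_only_through_iff_succ:
  assumes "Suc i < kidx L"
  shows "splits_only_through L (lam L s) (lam L i) (lam L t + lam L i) \<longleftrightarrow>
    lam L t = lam L s + lam L (Suc i) - lam L i \<and>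
    \<not> splits_above L (lam L (Suc i)) (lam L s + lam L (Suc i))"
proof -
  define li l1 c ls x
    where "li = lam L i" and "l1 = lam L (Suc i)" and "c = lam L (kidx L)"
      and "ls = lam L s" and "x = lam L t"
  have order: "li < l1" "l1 < c" "c \<le> ls" "ls < x"
    using assms s_ge t_gt by (simp_all add: li_def l1_def c_def ls_def x_def lam_less_iff[OF ns] lam_le_iff[OF ns])
  have big: "\<And>n. c \<le> n \<Longrightarrow> n \<in> L" using mem_if_lam_kidx_le[OF ns] c_def by simp
  have above: "\<And>a. a \<in> L \<Longrightarrow> li < a \<Longrightarrow> l1 \<le> a" using lam_Suc_le[OF ns] li_def l1_def by simp
  have "l1 \<in> L" "ls \<in> L" using lam_in[OF ns] l1_def ls_def by simp_all
  have "splits_only_through L ls li (x + li) \<longleftrightarrow>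
      x = ls + l1 - li \<and> \<not> splits_above L l1 (ls + l1)"
  proof
    assume only: "splits_only_through L ls li (x + li)"
    then have avoid: "\<not> splits_above (L - {ls}) li (x + li)"
      unfolding splits_only_through_def by simp
    obtain b where b: "b \<in> L" "li < b" "ls + b = x + li" using only by (rule splits_only_throughD)
    have "b = l1"
    proof (rule ccontr)
      assume "b \<noteq> l1"
      then have "l1 < b" using above b by fastforce
      then have "splits_above (L - {ls}) li (x + li)"
        using order b big \<open>l1 \<in> L\<close> by (intro splits_above_DiffI[where a'=l1 and b'="x + li - l1"]) auto
      then show False using avoid by simp
    qed
    moreover have "\<not> splits_above L l1 (ls + l1)"
    proof
      assume "splits_above L l1 (ls + l1)"
      then obtain a' b' where "a' \<in> L" "b' \<in> L" "l1 < a'" "l1 < b'" "a' + b' = ls + l1"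
        unfolding splits_above_def by blast
      then have "splits_above (L - {ls}) li (x + li)"
        using order b \<open>b = l1\<close> by (intro splits_above_DiffI[where a'=a' and b'=b']) auto
      then show False using avoid by simp
    qed
    ultimately show "x = ls + l1 - li \<and> \<not> splits_above L l1 (ls + l1)" using b by simp
  next
    assume "x = ls + l1 - li \<and> \<not> splits_above L l1 (ls + l1)"
    then have y: "x + li = ls + l1" and no_split: "\<not> splits_above L l1 (ls + l1)"
      using order by auto
    have "splits_above L li (x + li)"
      unfolding splits_above_def y using order \<open>l1 \<in> L\<close> \<open>ls \<in> L\<close>
      by (metis less_le_trans less_trans)
    moreover have "\<not> splits_above (L - {ls}) li (x + li)"
    proof
      assume "splits_above (L - {ls}) li (x + li)"
      then obtain a b where ab: "a \<in> L" "b \<in> L" "li < a" "li < b" "a \<noteq> ls" "b \<noteq> ls" "a + b = ls + l1"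
        unfolding splits_above_def y by blast
      then have "l1 < a" "l1 < b" using above[of a] above[of b] by fastforce+
      then show False using no_split ab unfolding splits_above_def by blast
    qed
    ultimately show "splits_only_through L ls li (x + li)" unfolding splits_only_through_def by simp
  qed
  then show ?thesis by (simp add: li_def l1_def ls_def x_def)
qed

lemma splits_only_through_iff_conductor_eq:
  assumes "Suc i = kidx L" "s = kidx L"
  shows "splits_only_through L (lam L s) (lam L i) (lam L t + lam L i) \<longleftrightarrow>
    lam L t = lam L s + lam L (kidx L) - lam L i \<or>
    lam L t = lam L s + lam L (kidx L) - lam L i + 1"
proof -
  define li c x where "li = lam L i" and "c = lam L (kidx L)" and "x = lam L t"
  have "li < c" "c < x" "lam L s = c"
    using assms t_gt by (simp_all add: li_def c_def x_def lam_less_iff[OF ns])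
  have big: "\<And>n. c \<le> n \<Longrightarrow> n \<in> L" using mem_if_lam_kidx_le[OF ns] c_def by simp
  have above: "\<And>a. a \<in> L \<Longrightarrow> li < a \<Longrightarrow> c \<le> a"
    using lam_Suc_le[OF ns] assms(1) li_def c_def by metis
  have "splits_only_through L c li (x + li) \<longleftrightarrow> x = c + c - li \<or> x = c + c - li + 1"
  proof
    assume only: "splits_only_through L c li (x + li)"
    obtain b where b: "b \<in> L" "li < b" "c + b = x + li" using only by (rule splits_only_throughD)
    have "b \<le> Suc c"
    proof (rule ccontr)
      assume "\<not> b \<le> Suc c"
      \<comment> \<open>then the splitting (c + 1) + (b - 1) avoids c\<close>
      then have "splits_above (L - {c}) li (x + li)"
        using b big \<open>li < c\<close> by (intro splits_above_DiffI[where a'="Suc c" and b'="b - 1"]) auto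
      then show False using only unfolding splits_only_through_def by simp
    qed
    then have "b = c \<or> b = Suc c" using above b by fastforce
    then show "x = c + c - li \<or> x = c + c - li + 1" using b \<open>li < c\<close> by auto
  next
    assume x: "x = c + c - li \<or> x = c + c - li + 1"
    have "splits_above L li (x + li)"
      unfolding splits_above_def using x \<open>li < c\<close> big
      by (intro bexI[of _ c] bexI[of _ "x + li - c"]) auto
    moreover have "\<not> splits_above (L - {c}) li (x + li)"
    proof
      assume "splits_above (L - {c}) li (x + li)"
      then obtain a b where "a \<in> L" "b \<in> L" "li < a" "li < b" "a \<noteq> c" "b \<noteq> c" "a + b = x + li"
        unfolding splits_above_def by blast
      then have "c < a" "c < b" "a + b = x + li" using above by fastforce+
      then show False using x \<open>li < c\<close> by linarith
    qed
    ultimately show "splits_only_through L c li (x + li)" unfolding splits_only_through_def by simp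
  qed
  then show ?thesis by (simp add: li_def c_def x_def \<open>lam L s = c\<close>)
qed

lemma splits_only_through_iff_conductor_less:
  assumes "Suc i = kidx L" "kidx L < s"
  shows "splits_only_through L (lam L s) (lam L i) (lam L t + lam L i) \<longleftrightarrow>
    kidx L + 1 = s \<and> lam L t = lam L s + lam L (kidx L) - lam L i"
proof -
  define li c ls x where "li = lam L i" and "c = lam L (kidx L)" and "ls = lam L s"
    and "x = lam L t"
  have "li < c" "c < ls" "ls < x"
    using assms t_gt by (simp_all add: li_def c_def ls_def x_def lam_less_iff[OF ns])
  have ls_eq: "ls = c + (s - kidx L)"
    using lam_eq_add_genus[OF ns] assms s_ge by (simp add: c_def ls_def)
  have big: "\<And>n. c \<le> n \<Longrightarrow> n \<in> L" using mem_if_lam_kidx_le[OF ns] c_def by simp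
  have above: "\<And>a. a \<in> L \<Longrightarrow> li < a \<Longrightarrow> c \<le> a"
    using lam_Suc_le[OF ns] assms(1) li_def c_def by metis
  have "splits_only_through L ls li (x + li) \<longleftrightarrow> kidx L + 1 = s \<and> x = ls + c - li"
  proof
    assume only: "splits_only_through L ls li (x + li)"
    then have avoid: "\<not> splits_above (L - {ls}) li (x + li)"
      unfolding splits_only_through_def by simp
    obtain b where b: "b \<in> L" "li < b" "ls + b = x + li" using only by (rule splits_only_throughD)
    have "b = c"
    proof (rule ccontr)
      assume "b \<noteq> c"
      then have "splits_above (L - {ls}) li (x + li)"
        using b big above[OF b(1,2)] \<open>li < c\<close> \<open>c < ls\<close>
        by (intro splits_above_DiffI[where a'=c and b'="x + li - c"]) auto
      then show False using avoid by simp
    qed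
    moreover have "kidx L + 1 = s"
    proof (rule ccontr)
      assume "kidx L + 1 \<noteq> s"
      \<comment> \<open>then ls \<ge> c + 2, and the splitting (c + 1) + (ls - 1) of ls + c avoids ls\<close>
      then have "splits_above (L - {ls}) li (x + li)"
        using b \<open>b = c\<close> big ls_eq assms(2) \<open>li < c\<close>
        by (intro splits_above_DiffI[where a'="Suc c" and b'="ls - 1"]) auto
      then show False using avoid by simp
    qed
    ultimately show "kidx L + 1 = s \<and> x = ls + c - li" using b by simp
  next
    assume "kidx L + 1 = s \<and> x = ls + c - li"
    then have ls: "ls = Suc c" and y: "x + li = c + Suc c" using ls_eq \<open>li < c\<close> by auto
    have "splits_above L li (x + li)"
      unfolding splits_above_def y using big \<open>li < c\<close> by (intro bexI[of _ c] bexI[of _ "Suc c"]) auto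
    moreover have "\<not> splits_above (L - {ls}) li (x + li)"
    proof
      assume "splits_above (L - {ls}) li (x + li)"
      then obtain a b where "a \<in> L" "b \<in> L" "li < a" "li < b" "a \<noteq> Suc c" "b \<noteq> Suc c"
          "a + b = c + Suc c"
        unfolding splits_above_def y ls by blast
      then have "c \<le> a" "c \<le> b" "a \<noteq> Suc c" "b \<noteq> Suc c" "a + b = c + Suc c"
        using above by blast+
      then show False by linarith
    qed
    ultimately show "splits_only_through L ls li (x + li)" unfolding splits_only_through_def by simp
  qed
  then show ?thesis by (simp add: li_def c_def ls_def x_def)
qed

end

theorem lemma2:
  fixes L :: "nat set" and s i t :: nat
  defines "k \<equiv> kidx L"
  defines "Lt \<equiv> L - {lam L s}"
  defines "C1 \<equiv> order_seed L i (lam L t)"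
  defines "C2 \<equiv> i + 1 < k \<and> lam L t = lam L s + lam L (i + 1) - lam L i \<and> order_seed L (i + 1) (lam L s)"
  defines "C3 \<equiv> i + 1 = k \<and> k + 1 = s \<and> lam L t = lam L s + lam L k - lam L (k - 1)"
  defines "C4 \<equiv> i + 1 = k \<and> k = s \<and> (lam L t = lam L s + lam L k - lam L (k - 1) \<or>
                  lam L t = lam L s + lam L k - lam L (k - 1) + 1)"
  assumes "numerical_semigroup L"
    and "s \<ge> k" and "order_seed L 0 (lam L s)"
    and "i < k" and "t > s"
  shows "(order_seed Lt i (lam L t) \<longleftrightarrow> C1 \<or> C2 \<or> C3 \<or> C4)
         \<and> \<not> (C1 \<and> C2) \<and> \<not> (C1 \<and> C3) \<and> \<not> (C1 \<and> C4)
         \<and> \<not> (C2 \<and> C3) \<and> \<not> (C2 \<and> C4) \<and> \<not> (C3 \<and> C4)"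
proof -
  note ns = \<open>numerical_semigroup L\<close>
  have sk: "kidx L \<le> s" and ik: "i < kidx L" and ts: "s < t" using assms by (simp_all add: k_def)
  define y where "y = lam L t + lam L i"
  have "is_generator L (lam L s)" using is_generator_if_order_seed_0 assms by blast
  then have seed_Lt: "order_seed Lt i (lam L t) \<longleftrightarrow> \<not> splits_above Lt (lam L i) y"
    using order_seed_Diff_iff[OF ns] sk ik ts by (simp add: Lt_def y_def)
  have seed_L: "C1 \<longleftrightarrow> \<not> splits_above L (lam L i) y"
    using order_seed_iff_not_splits_above[OF ns ik] sk ts by (simp add: C1_def y_def)
  have through: "splits_only_through L (lam L s) (lam L i) y \<longleftrightarrow> C2 \<or> C3 \<or> C4"
  proof (cases "Suc i < kidx L")
    case True
    then show ?thesis
      using splits_only_through_iff_succ[OF ns sk ts] order_seed_iff_not_splits_above[OF ns True sk]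
      by (simp add: C2_def C3_def C4_def k_def y_def)
  next
    case False
    then have i: "Suc i = kidx L" "kidx L - 1 = i" using ik by simp_all
    show ?thesis
    proof (cases "s = kidx L")
      case True
      then show ?thesis using splits_only_through_iff_conductor_eq[OF ns sk ts i(1)] i
        by (simp add: C2_def C3_def C4_def k_def y_def)
    next
      case False
      then show ?thesis using splits_only_through_iff_conductor_less[OF ns sk ts i(1)] i sk
        by (simp add: C2_def C3_def C4_def k_def y_def)
    qed
  qed
  have "splits_above Lt (lam L i) y \<Longrightarrow> splits_above L (lam L i) y"
    using splits_above_mono Lt_def by blast
  then show ?thesis
    using seed_Lt seed_L through unfolding splits_only_through_def Lt_def
    by (auto simp: C2_def C3_def C4_def)
qed

end
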